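(* Consider Phases 0 and 1 of the Source Filter protocol, run in the noisy $\mathcal{PULL}(h)$ model with alphabet $\{0,1\}$ and $\delta$-uniform noise with $\delta\in[0,1/2)$. Assume the parameter $m$ satisfies $$m\ge c_1\left(\frac{n\delta\log n}{\min\{s^2,n\}(1-2\delta)^2}+\frac{\sqrt n\log n}{s}+\frac{(s_0+s_1)\log n}{s^2}+h\log n\right)$$ for a sufficiently large absolute constant $c_1$, and that $s_1>s_0$. Then, for every agent $i$, the weak-opinion $\tilde Y^{(i)}$ computed at the end of Phase 1 satisfies $$\Pr(\tilde Y^{(i)}=1)\ge\frac12+4\sqrt{\frac{\log n}{n}}.$$ Moreover, the weak-opinions $\{\tilde Y^{(i)}\}_{i\in I}$ are mutually independent.
   Context: Agents are $I=\{1,\dots,n\}$. Some agents are sources, each with a preference in $\{0,1\}$; $s_1$ (resp. $s_0$) sources have preference $1$ (resp. $0$), with $s_0,s_1\le n/4$ and $s=|s_1-s_0|\ge1$. Noisy $\mathcal{PULL}(h)$ model: in each synchronous round, every agent displays a message in $\{0,1\}$. Every agent then samples $h$ agents independently and uniformly at random from $I$, with replacement. For each sampled agent, it observes the displayed message, flipped independently with probability $\delta$ (this is $\delta$-uniform noise on $\{0,1\}$). All sampling, noise and private coins are mutually independent. Source Filter, Phases 0 and 1 (all agents start simultaneously): - Phase 0 lasts $\lceil m/h\rceil$ rounds. Non-source agents display $0$ and sources display their preference. Each agent lets $\mathrm{Counter}_1$ be the number of received messages equal to $1$ during Phase 0. - Phase 1 lasts the next $\lceil m/h\rceil$ rounds.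 Non-source agents display $1$ and sources display their preference. Each agent lets $\mathrm{Counter}_0$ be the number of received messages equal to $0$ during Phase 1. - At the end of Phase 1, agent $i$ sets its weak-opinion $\tilde Y^{(i)}=1$ if $\mathrm{Counter}_1>\mathrm{Counter}_0$, $\tilde Y^{(i)}=0$ if $\mathrm{Counter}_1<\mathrm{Counter}_0$, and $\tilde Y^{(i)}$ equal to an independent fair coin if they are equal. *)

theory Defs
  imports "HOL-Probability.Probability"
begin

(* Agents are 1..n.  Messages are bool (True = 1, False = 0).
   S1 = set of sources with preference 1, S0 = set of sources with preference 0. *)

definition phase_len :: "nat \<Rightarrow> nat \<Rightarrow> nat" where
  "phase_len m h = nat \<lceil>real m / real h\<rceil>"

definition display0 :: "nat set \<Rightarrow> nat set \<Rightarrow> nat \<Rightarrow> bool" where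
  "display0 S0 S1 j = (if j \<in> S1 then True else if j \<in> S0 then False else False)"

definition display1 :: "nat set \<Rightarrow> nat set \<Rightarrow> nat \<Rightarrow> bool" where
  "display1 S0 S1 j = (if j \<in> S1 then True else if j \<in> S0 then False else True)"

definition noisy_sample :: "nat \<Rightarrow> real \<Rightarrow> (nat \<times> bool) pmf" where
  "noisy_sample n \<delta> = pair_pmf (pmf_of_set {1..n}) (bernoulli_pmf \<delta>)"

definition observe :: "(nat \<Rightarrow> bool) \<Rightarrow> nat \<times> bool \<Rightarrow> bool" where
  "observe disp s = (if snd s then \<not> disp (fst s) else disp (fst s))"

(* Private randomness of one agent: the pulls of Phase 0 indexed by (round, sample) in
   {..<R} x {..<h}, the pulls of Phase 1 indexed likewise, and a fair tie-breaking coin. *)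
type_synonym agent_coins = "((nat \<times> nat) \<Rightarrow> (nat \<times> bool)) \<times> ((nat \<times> nat) \<Rightarrow> (nat \<times> bool)) \<times> bool"

definition agent_pmf :: "nat \<Rightarrow> real \<Rightarrow> nat \<Rightarrow> nat \<Rightarrow> agent_coins pmf" where
  "agent_pmf n \<delta> h R =
     pair_pmf (Pi_pmf ({..<R} \<times> {..<h}) undefined (\<lambda>_. noisy_sample n \<delta>))
       (pair_pmf (Pi_pmf ({..<R} \<times> {..<h}) undefined (\<lambda>_. noisy_sample n \<delta>))
                 (bernoulli_pmf (1/2)))"

definition source_filter_pmf :: "nat \<Rightarrow> real \<Rightarrow> nat \<Rightarrow> nat \<Rightarrow> (nat \<Rightarrow> agent_coins) pmf" where
  "source_filter_pmf n \<delta> h R = Pi_pmf {1..n} undefined (\<lambda>_. agent_pmf n \<delta> h R)"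

definition counter1 :: "nat set \<Rightarrow> nat set \<Rightarrow> nat \<Rightarrow> nat \<Rightarrow> agent_coins \<Rightarrow> nat" where
  "counter1 S0 S1 h R c =
     card {rk \<in> {..<R} \<times> {..<h}. observe (display0 S0 S1) (fst c rk) = True}"

definition counter0 :: "nat set \<Rightarrow> nat set \<Rightarrow> nat \<Rightarrow> nat \<Rightarrow> agent_coins \<Rightarrow> nat" where
  "counter0 S0 S1 h R c =
     card {rk \<in> {..<R} \<times> {..<h}. observe (display1 S0 S1) (fst (snd c) rk) = False}"

definition weak_opinion :: "nat set \<Rightarrow> nat set \<Rightarrow> nat \<Rightarrow> nat \<Rightarrow> agent_coins \<Rightarrow> bool" where
  "weak_opinion S0 S1 h R c =
     (if counter1 S0 S1 h R c > counter0 S0 S1 h R c then True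
      else if counter1 S0 S1 h R c < counter0 S0 S1 h R c then False
      else snd (snd c))"

end

theory Submission
  imports Defs
begin

(* Each agent uses only its own samples, so the weak opinions are independent.  A Phase 0
   sample shows 1 with probability p1 = delta + s1 (1 - 2 delta) / n and a Phase 1 sample
   shows 0 with probability p0 = delta + s0 (1 - 2 delta) / n, so the two counters are
   independent binomials U ~ Bin(N, p1), V ~ Bin(N, p0) with N = R h samples per phase, and
   Pr(Y = 1) = Pr(U > V) + Pr(U = V) / 2.
   Exchanging u and v multiplies the joint weight by r^(u - v), where
   r = p0 (1 - p1) / (p1 (1 - p0)) <= 1 - t and t = (p1 - p0) / p1; pairing (u, v) with (v, u)
   this gives Pr(Y = 1) >= 1/2 + E[min(1, t |U - V|)] / 8.  The function min(1, t |x|) dominates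
   a quartic polynomial in x, so this expectation is bounded below through the exact second and
   fourth moments of U - V: it is of order N (p1 - p0) if Var(U - V) < 1/16 and of order
   min(t sqrt(E[(U - V)^2]), 1/4) otherwise.  The lower bound on m makes both at least
   256 sqrt(ln n / n). *)

section \<open>Binomial expectations as finite sums\<close>

definition binomial_weight :: "nat \<Rightarrow> real \<Rightarrow> nat \<Rightarrow> real" where
  "binomial_weight n p k = real (n choose k) * p ^ k * (1 - p) ^ (n - k)"

definition binomial_expect :: "nat \<Rightarrow> real \<Rightarrow> (nat \<Rightarrow> real) \<Rightarrow> real" where
  "binomial_expect n p f = (\<Sum>k\<le>n. binomial_weight n p k * f k)"

lemma binomial_weight_nonneg: "p \<in> {0..1} \<Longrightarrow> binomial_weight n p k \<ge> 0"
  by (simp add: binomial_weight_def)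

lemma binomial_expect_eq_expectation:
  "p \<in> {0..1} \<Longrightarrow> binomial_expect n p f = measure_pmf.expectation (binomial_pmf n p) f"
  by (simp add: expectation_binomial_pmf' binomial_expect_def binomial_weight_def)

lemma binomial_expect_Suc:
  assumes p: "p \<in> {0..1}"
  shows "binomial_expect (Suc n) p f =
           p * binomial_expect n p (\<lambda>k. f (Suc k)) + (1 - p) * binomial_expect n p f"
proof -
  have "binomial_expect (Suc n) p f = measure_pmf.expectation (bernoulli_pmf p \<bind>
           (\<lambda>b. binomial_pmf n p \<bind> (\<lambda>k. return_pmf ((if b then 1 else 0) + k)))) f"
    using p by (simp add: binomial_expect_eq_expectation binomial_pmf_Suc)
  also have "\<dots> = (\<Sum>b\<in>UNIV. pmf (bernoulli_pmf p) b *\<^sub>R measure_pmf.expectation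
                    (binomial_pmf n p \<bind> (\<lambda>k. return_pmf ((if b then 1 else 0) + k))) f)"
    by (rule pmf_expectation_bind)
       (use p in \<open>auto simp: map_pmf_def[symmetric] intro!: finite_imageI\<close>)
  also have "\<dots> = p * binomial_expect n p (\<lambda>k. f (Suc k)) + (1 - p) * binomial_expect n p f"
    using p by (simp add: UNIV_bool map_pmf_def[symmetric] binomial_expect_eq_expectation)
  finally show ?thesis .
qed

lemma binomial_expect_const: "p \<in> {0..1} \<Longrightarrow> binomial_expect n p (\<lambda>_. c) = c"
  by (induction n)
     (simp_all add: binomial_expect_Suc algebra_simps, simp add: binomial_expect_def binomial_weight_def)

lemma binomial_expect_add:
  "binomial_expect n p (\<lambda>k. f k + g k) = binomial_expect n p f + binomial_expect n p g"
  by (simp add: binomial_expect_def sum.distrib algebra_simps)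

lemma binomial_expect_scale:
  "binomial_expect n p (\<lambda>k. c * f k) = c * binomial_expect n p f"
  by (simp add: binomial_expect_def sum_distrib_left algebra_simps)

lemma binomial_expect_sum:
  "binomial_expect n p (\<lambda>k. \<Sum>i\<in>I. f i k) = (\<Sum>i\<in>I. binomial_expect n p (f i))"
  unfolding binomial_expect_def by (simp add: sum_distrib_left sum.swap[of _ I])

lemma binomial_expect_shifted_power:
  "binomial_expect n p (\<lambda>k. (W k + c) ^ j) =
     (\<Sum>i\<le>j. real (j choose i) * c ^ (j - i) * binomial_expect n p (\<lambda>k. W k ^ i))"
proof -
  have "(W k + c) ^ j = (\<Sum>i\<le>j. (real (j choose i) * c ^ (j - i)) * W k ^ i)" for k
    unfolding binomial_ring[of "W k" c j] atLeast0AtMost by (simp add: mult_ac)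
  then show ?thesis
    by (simp add: binomial_expect_sum binomial_expect_scale)
qed

lemma binomial_central_moment_Suc:
  assumes p: "p \<in> {0..1}"
  shows "binomial_expect (Suc n) p (\<lambda>k. (real k - real (Suc n) * p) ^ j) =
    (\<Sum>i\<le>j. real (j choose i) * (p * (1 - p) ^ (j - i) + (1 - p) * (- p) ^ (j - i)) *
              binomial_expect n p (\<lambda>k. (real k - real n * p) ^ i))"
proof -
  define W where "W k = real k - real n * p" for k
  have "binomial_expect (Suc n) p (\<lambda>k. (real k - real (Suc n) * p) ^ j) =
        p * binomial_expect n p (\<lambda>k. (W k + (1 - p)) ^ j) + (1 - p) * binomial_expect n p (\<lambda>k. (W k + - p) ^ j)"
    unfolding binomial_expect_Suc[OF p] W_def by (simp add: algebra_simps)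
  then show ?thesis
    unfolding binomial_expect_shifted_power W_def
    by (simp add: sum_distrib_left sum.distrib[symmetric] algebra_simps)
qed

lemma binomial_central_moments:
  assumes p: "p \<in> {0..1}"
  shows "binomial_expect n p (\<lambda>k. real k - real n * p) = 0"
    and "binomial_expect n p (\<lambda>k. (real k - real n * p) ^ 2) = real n * p * (1 - p)"
    and "binomial_expect n p (\<lambda>k. (real k - real n * p) ^ 3) = real n * p * (1 - p) * (1 - 2 * p)"
    and "binomial_expect n p (\<lambda>k. (real k - real n * p) ^ 4) =
           real n * p * (1 - p) + 3 * real n * (real n - 2) * p\<^sup>2 * (1 - p)\<^sup>2"
proof -
  define M where "M n i = binomial_expect n p (\<lambda>k. (real k - real n * p) ^ i)" for n i
  have "M n 1 = 0 \<and> M n 2 = real n * p * (1 - p) \<and> M n 3 = real n * p * (1 - p) * (1 - 2 * p) \<and>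
        M n 4 = real n * p * (1 - p) + 3 * real n * (real n - 2) * p\<^sup>2 * (1 - p)\<^sup>2"
  proof (induction n)
    case 0
    then show ?case by (simp add: M_def binomial_expect_def)
  next
    case (Suc n)
    have step: "M (Suc n) j = (\<Sum>i\<le>j. real (j choose i) *
                  (p * (1 - p) ^ (j - i) + (1 - p) * (- p) ^ (j - i)) * M n i)" for j
      unfolding M_def by (rule binomial_central_moment_Suc[OF p])
    have M0: "M n 0 = 1" unfolding M_def using binomial_expect_const[OF p] by simp
    have IH: "M n (Suc 0) = 0" "M n 2 = real n * p * (1 - p)" "M n 3 = real n * p * (1 - p) * (1 - 2 * p)"
      "M n 4 = real n * p * (1 - p) + 3 * real n * (real n - 2) * p\<^sup>2 * (1 - p)\<^sup>2"
      using Suc.IH by auto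
    have sets: "{..1::nat} = {0,1}" "{..2::nat} = {0,1,2}" "{..3::nat} = {0,1,2,3}"
      "{..4::nat} = {0,1,2,3,4}"
      by auto
    have choose: "(3::nat) choose 2 = 3" "(4::nat) choose 2 = 6" "(4::nat) choose 3 = 4"
      by (simp_all add: eval_nat_numeral)
    show ?case
      unfolding step sets by (simp add: choose M0 IH algebra_simps power2_eq_square power3_eq_cube power4_eq_xxxx)
  qed
  then show "binomial_expect n p (\<lambda>k. real k - real n * p) = 0"
    and "binomial_expect n p (\<lambda>k. (real k - real n * p) ^ 2) = real n * p * (1 - p)"
    and "binomial_expect n p (\<lambda>k. (real k - real n * p) ^ 3) = real n * p * (1 - p) * (1 - 2 * p)"
    and "binomial_expect n p (\<lambda>k. (real k - real n * p) ^ 4) =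
           real n * p * (1 - p) + 3 * real n * (real n - 2) * p\<^sup>2 * (1 - p)\<^sup>2"
    by (simp_all add: M_def)
qed

section \<open>Moments of the difference of two independent binomials\<close>

definition binomial_pair_expect :: "nat \<Rightarrow> real \<Rightarrow> real \<Rightarrow> (nat \<Rightarrow> nat \<Rightarrow> real) \<Rightarrow> real" where
  "binomial_pair_expect N p q F =
     (\<Sum>u\<le>N. \<Sum>v\<le>N. binomial_weight N p u * binomial_weight N q v * F u v)"

lemma binomial_pair_expect_iterated:
  "binomial_pair_expect N p q F = binomial_expect N q (\<lambda>v. binomial_expect N p (\<lambda>u. F u v))"
  unfolding binomial_pair_expect_def binomial_expect_def
  by (subst sum.swap) (simp add: sum_distrib_left sum_distrib_right algebra_simps)

lemma binomial_pair_expect_mono: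
  assumes "p \<in> {0..1}" "q \<in> {0..1}" "\<And>u v. u \<le> N \<Longrightarrow> v \<le> N \<Longrightarrow> F u v \<le> G u v"
  shows "binomial_pair_expect N p q F \<le> binomial_pair_expect N p q G"
  unfolding binomial_pair_expect_def
  using assms by (intro sum_mono mult_left_mono) (auto intro!: mult_nonneg_nonneg binomial_weight_nonneg)

lemma binomial_pair_expect_linear:
  "binomial_pair_expect N p q (\<lambda>u v. a * F u v + b * G u v) =
     a * binomial_pair_expect N p q F + b * binomial_pair_expect N p q G"
  unfolding binomial_pair_expect_def by (simp add: sum.distrib sum_distrib_left algebra_simps)

lemma binomial_pair_expect_const:
  "p \<in> {0..1} \<Longrightarrow> q \<in> {0..1} \<Longrightarrow> binomial_pair_expect N p q (\<lambda>u v. c) = c"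
  by (simp add: binomial_pair_expect_iterated binomial_expect_const)

lemma binomial_pair_diff_moments:
  fixes N :: nat and p q :: real
  assumes p: "p \<in> {0..1}" and q: "q \<in> {0..1}"
  defines "Vp \<equiv> N * p * (1 - p)" and "Vq \<equiv> N * q * (1 - q)" and "\<mu> \<equiv> N * (p - q)"
  shows "binomial_pair_expect N p q (\<lambda>u v. (real u - real v) ^ 2) = Vp + Vq + \<mu>\<^sup>2"
    and "binomial_pair_expect N p q (\<lambda>u v. (real u - real v) ^ 4) =
           Vp + 3 * real N * (real N - 2) * p\<^sup>2 * (1 - p)\<^sup>2 + Vq + 3 * real N * (real N - 2) * q\<^sup>2 * (1 - q)\<^sup>2
           + 6 * Vp * Vq + 6 * \<mu>\<^sup>2 * (Vp + Vq) + 4 * \<mu> * (Vp * (1 - 2 * p) - Vq * (1 - 2 * q)) + \<mu> ^ 4"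
proof -
  define Wp where "Wp u = real u - real N * p" for u
  define Wq where "Wq v = real v - real N * q" for v
  have split: "real u - real v = Wp u + (\<mu> - Wq v)" for u v
    unfolding Wp_def Wq_def \<mu>_def by (simp add: algebra_simps)
  note mp = binomial_central_moments[OF p, of N, folded Wp_def, folded Vp_def]
  note mq = binomial_central_moments[OF q, of N, folded Wq_def, folded Vq_def]
  have sets: "{..1::nat} = {0,1}" "{..2::nat} = {0,1,2}" "{..3::nat} = {0,1,2,3}"
    "{..4::nat} = {0,1,2,3,4}"
    by auto
  have choose: "(3::nat) choose 2 = 3" "(4::nat) choose 2 = 6" "(4::nat) choose 3 = 4"
    by (simp_all add: eval_nat_numeral)
  have inner: "binomial_expect N p (\<lambda>u. (real u - real v) ^ j) =
      (\<Sum>i\<le>j. real (j choose i) * (\<mu> - Wq v) ^ (j - i) * binomial_expect N p (\<lambda>u. Wp u ^ i))" for v j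
    unfolding split by (rule binomial_expect_shifted_power)
  have outer: "binomial_expect N q (\<lambda>v. (\<mu> - Wq v) ^ j) =
      (\<Sum>i\<le>j. real (j choose i) * \<mu> ^ (j - i) * ((- 1) ^ i * binomial_expect N q (\<lambda>v. Wq v ^ i)))" for j
  proof -
    have "(- Wq v) ^ i = (- 1) ^ i * Wq v ^ i" for v i
      by (rule power_minus)
    then show ?thesis
      using binomial_expect_shifted_power[of N q "\<lambda>v. - Wq v" \<mu> j]
      by (simp only: binomial_expect_scale add.commute[of "- _"] diff_conv_add_uminus)
  qed
  have E0: "binomial_expect N p (\<lambda>u. Wp u ^ 0) = 1" "binomial_expect N q (\<lambda>u. Wq u ^ 0) = 1"
    using binomial_expect_const p q by simp_all
  define Mp3 where "Mp3 = Vp * (1 - 2 * p)"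
  define Mp4 where "Mp4 = Vp + 3 * real N * (real N - 2) * p\<^sup>2 * (1 - p)\<^sup>2"
  have in2: "binomial_expect N p (\<lambda>u. (real u - real v) ^ 2) = (\<mu> - Wq v) ^ 2 + Vp" for v
    unfolding inner sets using mp E0 by simp
  have in4: "binomial_expect N p (\<lambda>u. (real u - real v) ^ 4) =
      (\<mu> - Wq v) ^ 4 + 6 * Vp * (\<mu> - Wq v) ^ 2 + 4 * Mp3 * (\<mu> - Wq v) + Mp4" for v
    unfolding inner sets using mp E0 by (simp add: choose Mp3_def Mp4_def)
  have out1: "binomial_expect N q (\<lambda>v. \<mu> - Wq v) = \<mu>"
    using outer[of 1] mq E0 by (simp add: sets)
  have out2: "binomial_expect N q (\<lambda>v. (\<mu> - Wq v) ^ 2) = Vq + \<mu>\<^sup>2"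
    unfolding outer sets using mq E0 by simp
  have out4: "binomial_expect N q (\<lambda>v. (\<mu> - Wq v) ^ 4) =
      \<mu> ^ 4 + 6 * \<mu>\<^sup>2 * Vq - 4 * \<mu> * Vq * (1 - 2 * q) + Vq + 3 * real N * (real N - 2) * q\<^sup>2 * (1 - q)\<^sup>2"
    unfolding outer sets using mq E0 by (simp add: choose)
  show "binomial_pair_expect N p q (\<lambda>u v. (real u - real v) ^ 2) = Vp + Vq + \<mu>\<^sup>2"
    unfolding binomial_pair_expect_iterated in2
    using q by (simp add: binomial_expect_add binomial_expect_const out2)
  show "binomial_pair_expect N p q (\<lambda>u v. (real u - real v) ^ 4) =
           Vp + 3 * real N * (real N - 2) * p\<^sup>2 * (1 - p)\<^sup>2 + Vq + 3 * real N * (real N - 2) * q\<^sup>2 * (1 - q)\<^sup>2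
           + 6 * Vp * Vq + 6 * \<mu>\<^sup>2 * (Vp + Vq) + 4 * \<mu> * (Vp * (1 - 2 * p) - Vq * (1 - 2 * q)) + \<mu> ^ 4"
    unfolding binomial_pair_expect_iterated in4
      binomial_expect_add binomial_expect_scale binomial_expect_const[OF q] out1 out2 out4
    by (simp add: Mp3_def Mp4_def algebra_simps)
qed

lemma binomial_pair_fourth_moment_le:
  fixes N :: nat and p q :: real
  assumes pq: "0 \<le> q" "q \<le> p" "p \<le> 1/2"
  defines "V \<equiv> N * p * (1 - p) + N * q * (1 - q)" and "\<mu> \<equiv> N * (p - q)"
  shows "binomial_pair_expect N p q (\<lambda>u v. (real u - real v) ^ 4) \<le> V + 11 * V\<^sup>2 + 6 * \<mu>\<^sup>2 * V + \<mu> ^ 4"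
proof -
  define Vp where "Vp = N * p * (1 - p)"
  define Vq where "Vq = N * q * (1 - q)"
  have Vp: "0 \<le> Vp" and Vq: "0 \<le> Vq" and V: "V = Vp + Vq"
    using pq by (simp_all add: Vp_def Vq_def V_def)
  have "N * p * (1/2) \<le> N * p * (1 - p)"
    using pq by (intro mult_left_mono) auto
  then have Np: "N * p \<le> 2 * Vp"
    unfolding Vp_def by linarith
  have "\<mu> \<le> N * p" and \<mu>: "0 \<le> \<mu>"
    using pq by (simp_all add: \<mu>_def right_diff_distrib mult_left_mono)
  then have "\<mu> * V \<le> 2 * V * V"
    using Np Vp Vq V by (intro mult_right_mono) auto
  moreover have "Vp * (1 - 2 * p) \<le> Vp * 1" and "0 \<le> Vq * (1 - 2 * q)"
    using pq Vp Vq by (intro mult_left_mono mult_nonneg_nonneg; simp)+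
  then have "4 * \<mu> * (Vp * (1 - 2 * p) - Vq * (1 - 2 * q)) \<le> 4 * \<mu> * V"
    using \<mu> V Vq by (intro mult_left_mono) auto
  ultimately have cross: "4 * \<mu> * (Vp * (1 - 2 * p) - Vq * (1 - 2 * q)) \<le> 8 * V\<^sup>2"
    by (simp add: power2_eq_square)
  have square: "3 * real N * (real N - 2) * x\<^sup>2 * (1 - x)\<^sup>2 \<le> 3 * (N * x * (1 - x))\<^sup>2" for x :: real
  proof -
    have "real N * (real N - 2) * (3 * x\<^sup>2 * (1 - x)\<^sup>2) \<le> real N * real N * (3 * x\<^sup>2 * (1 - x)\<^sup>2)"
      by (intro mult_right_mono) (simp_all add: mult_left_mono)
    moreover have "3 * real N * (real N - 2) * x\<^sup>2 * (1 - x)\<^sup>2 =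
        real N * (real N - 2) * (3 * x\<^sup>2 * (1 - x)\<^sup>2)"
      by (simp only: mult_ac)
    moreover have "3 * (N * x * (1 - x))\<^sup>2 = real N * real N * (3 * x\<^sup>2 * (1 - x)\<^sup>2)"
      by (simp add: power_mult_distrib power2_eq_square mult_ac)
    ultimately show ?thesis by (simp only:)
  qed
  have "V\<^sup>2 = Vp\<^sup>2 + 2 * Vp * Vq + Vq\<^sup>2" and "6 * \<mu>\<^sup>2 * (Vp + Vq) = 6 * \<mu>\<^sup>2 * V"
    unfolding V by (simp_all add: power2_eq_square algebra_simps)
  moreover have "binomial_pair_expect N p q (\<lambda>u v. (real u - real v) ^ 4) =
      Vp + 3 * real N * (real N - 2) * p\<^sup>2 * (1 - p)\<^sup>2 + Vq + 3 * real N * (real N - 2) * q\<^sup>2 * (1 - q)\<^sup>2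
      + 6 * Vp * Vq + 6 * \<mu>\<^sup>2 * (Vp + Vq) + 4 * \<mu> * (Vp * (1 - 2 * p) - Vq * (1 - 2 * q)) + \<mu> ^ 4"
    using pq unfolding Vp_def Vq_def \<mu>_def by (intro binomial_pair_diff_moments) auto
  ultimately show ?thesis
    using cross square[of p, folded Vp_def] square[of q, folded Vq_def] V by linarith
qed

section \<open>Anti-concentration of the difference\<close>

lemma binomial_weight_swap:
  assumes p: "0 < p" "p < 1" and q: "0 \<le> q" "q < 1" and "v \<le> u"
  shows "binomial_weight N p v * binomial_weight N q u =
           (q * (1 - p) / (p * (1 - q))) ^ (u - v) * (binomial_weight N p u * binomial_weight N q v)"
proof (cases "u \<le> N")
  case False
  then show ?thesis by (simp add: binomial_weight_def)
next
  case True
  obtain j where u: "u = v + j" using \<open>v \<le> u\<close> le_Suc_ex by blast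
  have "N - v = (N - u) + j" using True u by simp
  then show ?thesis
    unfolding binomial_weight_def u using p q
    by (simp only: power_add power_divide power_mult_distrib) (simp add: field_simps)
qed

lemma one_minus_power_ge_min:
  fixes t r :: real
  assumes "0 \<le> t" "0 \<le> r" "r \<le> 1 - t"
  shows "min 1 (t * j) / 2 \<le> 1 - r ^ j"
proof -
  have "r ^ j * (1 + t * j) \<le> exp (- t) ^ j * exp (t * j)"
    using assms exp_ge_add_one_self[of "- t"] exp_ge_add_one_self[of "t * j"]
    by (intro mult_mono power_mono) auto
  also have "\<dots> = 1" by (simp add: exp_of_nat_mult[symmetric] exp_add[symmetric])
  finally have "r ^ j * (1 + t * j) \<le> 1" .
  moreover have pos: "1 + t * j > 0"
    using assms by (simp add: add_pos_nonneg)
  ultimately have "t * j / (1 + t * j) \<le> 1 - r ^ j"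
    by (simp add: field_simps)
  moreover have "min 1 x / 2 \<le> x / (1 + x)" if "x \<ge> 0" for x :: real
    using that by (cases "x \<le> 1") (simp_all add: field_simps mult_left_le)
  then have "min 1 (t * j) / 2 \<le> t * j / (1 + t * j)"
    using assms by simp
  ultimately show ?thesis by linarith
qed

lemma odds_ratio_le:
  fixes p q :: real
  assumes "0 \<le> q" "q < p" "p \<le> 1/2"
  shows "q * (1 - p) / (p * (1 - q)) \<le> 1 - (p - q) / p"
proof -
  have "q * (1 - p) / (p * (1 - q)) = (q / p) * ((1 - p) / (1 - q))"
    by simp
  also have "\<dots> \<le> q / p"
    using assms by (intro mult_left_le) auto
  also have "\<dots> = 1 - (p - q) / p"
    using assms by (simp add: field_simps)
  finally show ?thesis .
qed

lemma binomial_pair_weight_antisym: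
  fixes N u v :: nat and p q :: real
  assumes pq: "0 \<le> q" "q < p" "p \<le> 1/2"
  defines "w \<equiv> \<lambda>u v. binomial_weight N p u * binomial_weight N q v"
  shows "(w u v + w v u) * (min 1 ((p - q) / p * \<bar>real u - real v\<bar>) / 4)
           \<le> (w u v - w v u) * sgn (real u - real v)"
proof -
  define t where "t = (p - q) / p"
  define r where "r = q * (1 - p) / (p * (1 - q))"
  have t: "0 \<le> t" and r: "0 \<le> r" "r \<le> 1 - t"
    using pq odds_ratio_le[OF pq] by (auto simp: t_def r_def)
  have key: "(w x y + w y x) * (min 1 (t * \<bar>real x - real y\<bar>) / 4) \<le> w x y - w y x"
    if "y < x" for x y
  proof -
    define m where "m = min 1 (t * \<bar>real x - real y\<bar>)"
    have wyx: "w y x = r ^ (x - y) * w x y"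
      unfolding w_def r_def using binomial_weight_swap[of p q y x N] pq that by simp
    have "m / 2 \<le> 1 - r ^ (x - y)"
      unfolding m_def using one_minus_power_ge_min[OF t r, of "x - y"] that by (simp add: of_nat_diff)
    moreover have "(1 + r ^ (x - y)) * m \<le> 2 * m"
      using r t by (intro mult_right_mono) (auto simp: m_def power_le_one)
    ultimately have "(1 + r ^ (x - y)) * (m / 4) \<le> 1 - r ^ (x - y)"
      by linarith
    moreover have "w x y \<ge> 0"
      unfolding w_def using pq by (intro mult_nonneg_nonneg binomial_weight_nonneg) auto
    ultimately have "w x y * ((1 + r ^ (x - y)) * (m / 4)) \<le> w x y * (1 - r ^ (x - y))"
      by (rule mult_left_mono)
    then show ?thesis
      unfolding wyx m_def by (simp add: algebra_simps)
  qed
  consider "v < u" | "u < v" | "u = v" by linarith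
  then show ?thesis
  proof cases
    case 1
    then show ?thesis using key[OF 1] by (simp add: t_def)
  next
    case 2
    have "\<bar>real v - real u\<bar> = \<bar>real u - real v\<bar>"
      by (rule abs_minus_commute)
    then show ?thesis using key[OF 2] 2 by (simp add: t_def algebra_simps)
  qed simp
qed

definition win_score :: "nat \<Rightarrow> nat \<Rightarrow> real" where
  "win_score u v = (if u > v then 1 else if u < v then 0 else 1/2)"

lemma binomial_pair_win_ge:
  assumes pq: "0 \<le> q" "q < p" "p \<le> 1/2"
  shows "1/2 + binomial_pair_expect N p q (\<lambda>u v. min 1 ((p - q) / p * \<bar>real u - real v\<bar>)) / 8
           \<le> binomial_pair_expect N p q win_score"
proof -
  define w where "w u v = binomial_weight N p u * binomial_weight N q v" for u v
  define sg where "sg u v = sgn (real u - real v)" for u v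
  define g where "g u v = min 1 ((p - q) / p * \<bar>real u - real v\<bar>) / 4" for u v
  have E: "binomial_pair_expect N p q F = (\<Sum>u\<le>N. \<Sum>v\<le>N. w u v * F u v)" for F
    unfolding binomial_pair_expect_def w_def ..
  have swap: "(\<Sum>u\<le>N. \<Sum>v\<le>N. f v u) = (\<Sum>u\<le>N. \<Sum>v\<le>N. f u v)" for f :: "nat \<Rightarrow> nat \<Rightarrow> real"
    by (rule sum.swap)
  have g_sym: "g v u = g u v" for u v
    unfolding g_def by (simp add: abs_minus_commute)
  have sg_antisym: "sg v u = - sg u v" for u v
    unfolding sg_def by (simp add: sgn_minus[symmetric])
  have "2 * binomial_pair_expect N p q g =
          (\<Sum>u\<le>N. \<Sum>v\<le>N. w u v * g u v) + (\<Sum>u\<le>N. \<Sum>v\<le>N. w v u * g v u)"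
    unfolding E swap[of "\<lambda>a b. w a b * g a b"] by simp
  also have "\<dots> = (\<Sum>u\<le>N. \<Sum>v\<le>N. (w u v + w v u) * g u v)"
    using g_sym by (simp add: distrib_right sum.distrib)
  also have "\<dots> \<le> (\<Sum>u\<le>N. \<Sum>v\<le>N. (w u v - w v u) * sg u v)"
    unfolding w_def g_def sg_def
    by (intro sum_mono) (rule binomial_pair_weight_antisym[OF pq])
  also have "\<dots> = (\<Sum>u\<le>N. \<Sum>v\<le>N. w u v * sg u v) + (\<Sum>u\<le>N. \<Sum>v\<le>N. w v u * sg v u)"
  proof -
    have "(w u v - w v u) * sg u v = w u v * sg u v + w v u * sg v u" for u v
      using sg_antisym[of u v] by (simp add: algebra_simps)
    then show ?thesis by (simp add: sum.distrib)
  qed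
  also have "\<dots> = 2 * binomial_pair_expect N p q sg"
    unfolding E swap[of "\<lambda>a b. w a b * sg a b"] by simp
  finally have "binomial_pair_expect N p q g \<le> binomial_pair_expect N p q sg"
    by simp
  moreover have "binomial_pair_expect N p q win_score = 1/2 + binomial_pair_expect N p q sg / 2"
  proof -
    have "win_score = (\<lambda>u v. 1/2 * 1 + 1/2 * sg u v)"
      by (auto simp: fun_eq_iff win_score_def sg_def)
    then show ?thesis
      using binomial_pair_expect_linear[of N p q "1/2" "\<lambda>u v. 1" "1/2" sg]
        binomial_pair_expect_const[of p q N 1] pq by simp
  qed
  moreover have "binomial_pair_expect N p q (\<lambda>u v. min 1 ((p - q) / p * \<bar>real u - real v\<bar>))
                   = 4 * binomial_pair_expect N p q g"
    using binomial_pair_expect_linear[of N p q 4 g 0 g] by (simp add: g_def)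
  ultimately show ?thesis
    by linarith
qed

lemma min_one_ge_quartic_Ints:
  fixes t x :: real
  assumes t: "0 \<le> t" "t \<le> 1" and x: "x \<in> \<int>"
  shows "t / 2 * (3 * x\<^sup>2 - x ^ 4) \<le> min 1 (t * \<bar>x\<bar>)"
proof -
  obtain k :: int where k: "\<bar>x\<bar> = of_int \<bar>k\<bar>"
    using x by (metis Ints_cases of_int_abs)
  have quartic: "3 * x\<^sup>2 - x ^ 4 = \<bar>x\<bar>\<^sup>2 * (3 - \<bar>x\<bar>\<^sup>2)"
    by (simp add: power4_eq_xxxx power2_eq_square algebra_simps)
  consider "\<bar>k\<bar> = 0" | "\<bar>k\<bar> = 1" | "\<bar>k\<bar> \<ge> 2" by linarith
  then show ?thesis
  proof cases
    case 3
    then have "2\<^sup>2 \<le> \<bar>x\<bar>\<^sup>2"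
      using k by (intro power_mono) simp_all
    then have "3 * x\<^sup>2 - x ^ 4 \<le> 0"
      unfolding quartic by (intro mult_nonneg_nonpos) auto
    then have "t / 2 * (3 * x\<^sup>2 - x ^ 4) \<le> 0"
      using t by (intro mult_nonneg_nonpos) auto
    moreover have "0 \<le> min 1 (t * \<bar>x\<bar>)"
      using t by simp
    ultimately show ?thesis by linarith
  qed (use k t quartic in simp_all)
qed

lemma abs_ge_quartic:
  fixes x L :: real
  assumes L: "L > 0"
  shows "3 * x\<^sup>2 / (2 * L) - x ^ 4 / (2 * L ^ 3) \<le> \<bar>x\<bar>"
proof -
  have "\<bar>x\<bar> - (3 * x\<^sup>2 / (2 * L) - x ^ 4 / (2 * L ^ 3)) =
          \<bar>x\<bar> * (\<bar>x\<bar> - L)\<^sup>2 * (\<bar>x\<bar> + 2 * L) / (2 * L ^ 3)"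
    using L by (simp add: field_simps power2_eq_square power3_eq_cube power4_eq_xxxx flip: power2_abs)
  also have "\<dots> \<ge> 0"
    using L by simp
  finally show ?thesis by simp
qed

lemma min_one_ge_quartic:
  fixes x t t' L :: real
  assumes t': "0 \<le> t'" "t' \<le> t" and L: "L > 0"
  shows "(3 * t' / (2 * L) - t'\<^sup>2 / 4) * x\<^sup>2 - t' / (2 * L ^ 3) * x ^ 4 \<le> min 1 (t * \<bar>x\<bar>)"
proof -
  define y where "y = t' * \<bar>x\<bar>"
  have "y - y\<^sup>2 / 4 \<le> min 1 y"
    using sum_power2_ge_zero[of "y - 2" 0] by (auto simp: min_def power2_eq_square field_simps)
  also have "min 1 y \<le> min 1 (t * \<bar>x\<bar>)"
    unfolding y_def using t' by (intro min.mono mult_right_mono) auto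
  finally have "t' * \<bar>x\<bar> - t'\<^sup>2 * x\<^sup>2 / 4 \<le> min 1 (t * \<bar>x\<bar>)"
    by (simp add: y_def power_mult_distrib)
  moreover have "t' * (3 * x\<^sup>2 / (2 * L) - x ^ 4 / (2 * L ^ 3)) \<le> t' * \<bar>x\<bar>"
    using t' abs_ge_quartic[OF L] by (intro mult_left_mono) auto
  ultimately show ?thesis
    by (simp add: algebra_simps)
qed

lemma binomial_pair_min_ge_second_fourth_moment:
  assumes pq: "p \<in> {0..1}" "q \<in> {0..1}" and t: "0 \<le> t" "t \<le> 1"
  shows "t / 2 * (3 * binomial_pair_expect N p q (\<lambda>u v. (real u - real v)\<^sup>2)
                    - binomial_pair_expect N p q (\<lambda>u v. (real u - real v) ^ 4))
           \<le> binomial_pair_expect N p q (\<lambda>u v. min 1 (t * \<bar>real u - real v\<bar>))"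
proof -
  have "binomial_pair_expect N p q (\<lambda>u v. (3 * t / 2) * (real u - real v)\<^sup>2 + (- t / 2) * (real u - real v) ^ 4)
          \<le> binomial_pair_expect N p q (\<lambda>u v. min 1 (t * \<bar>real u - real v\<bar>))"
  proof (intro binomial_pair_expect_mono[OF pq])
    fix u v :: nat
    show "(3 * t / 2) * (real u - real v)\<^sup>2 + (- t / 2) * (real u - real v) ^ 4
            \<le> min 1 (t * \<bar>real u - real v\<bar>)"
      using min_one_ge_quartic_Ints[OF t, of "real u - real v"] by (simp add: algebra_simps)
  qed
  then show ?thesis
    unfolding binomial_pair_expect_linear by (simp add: algebra_simps)
qed

lemma binomial_pair_min_ge_sqrt_second_moment:
  assumes pq: "p \<in> {0..1}" "q \<in> {0..1}" and t: "0 \<le> t"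
    and M2: "binomial_pair_expect N p q (\<lambda>u v. (real u - real v)\<^sup>2) = M2" "M2 > 0"
    and M4: "binomial_pair_expect N p q (\<lambda>u v. (real u - real v) ^ 4) \<le> 27 * M2\<^sup>2"
  shows "min (t * sqrt M2) (1/4) / 8 \<le> binomial_pair_expect N p q (\<lambda>u v. min 1 (t * \<bar>real u - real v\<bar>))"
proof -
  define \<sigma> where "\<sigma> = sqrt M2"
  (* the quartic minorant is used at scale L = 6 \<sigma>, with t' capped so that t' \<sigma> \<le> 1/4 *)
  define t' where "t' = min t (1 / (4 * \<sigma>))"
  define y where "y = t' * \<sigma>"
  have \<sigma>: "\<sigma> > 0" "\<sigma>\<^sup>2 = M2"
    using M2 by (simp_all add: \<sigma>_def)
  have t': "0 \<le> t'" "t' \<le> t"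
    using t \<sigma> by (simp_all add: t'_def)
  have y: "y = min (t * \<sigma>) (1/4)" "0 \<le> y" "y \<le> 1/4"
    using \<sigma> t by (auto simp: y_def t'_def min_def field_simps)
  define a where "a = 3 * t' / (2 * (6 * \<sigma>)) - t'\<^sup>2 / 4"
  define b where "b = t' / (2 * (6 * \<sigma>) ^ 3)"
  have "binomial_pair_expect N p q (\<lambda>u v. a * (real u - real v)\<^sup>2 + (- b) * (real u - real v) ^ 4)
          \<le> binomial_pair_expect N p q (\<lambda>u v. min 1 (t * \<bar>real u - real v\<bar>))"
    using min_one_ge_quartic[OF t', of "6 * \<sigma>"] \<sigma>
    by (intro binomial_pair_expect_mono[OF pq]) (simp add: a_def b_def)
  then have "a * M2 - b * binomial_pair_expect N p q (\<lambda>u v. (real u - real v) ^ 4)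
               \<le> binomial_pair_expect N p q (\<lambda>u v. min 1 (t * \<bar>real u - real v\<bar>))"
    unfolding binomial_pair_expect_linear M2 by simp
  moreover have "b * binomial_pair_expect N p q (\<lambda>u v. (real u - real v) ^ 4) \<le> b * (27 * M2\<^sup>2)"
    using M4 t' \<sigma> by (intro mult_left_mono) (simp_all add: b_def)
  moreover have "a * M2 = y / 4 - y\<^sup>2 / 4" and "b * (27 * M2\<^sup>2) = y / 16"
    unfolding a_def b_def y_def \<sigma>(2)[symmetric] using \<sigma>(1)
    by (simp_all add: field_simps power2_eq_square power3_eq_cube)
  moreover have "y\<^sup>2 \<le> y / 4"
    using y mult_left_mono[of y "1/4" y] by (simp add: power2_eq_square)
  ultimately have "y / 8 \<le> binomial_pair_expect N p q (\<lambda>u v. min 1 (t * \<bar>real u - real v\<bar>))"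
    by linarith
  then show ?thesis
    using y(1) by (simp add: \<sigma>_def)
qed

lemma binomial_pair_win_small_variance:
  fixes N :: nat and p q :: real
  assumes pq: "0 \<le> q" "q < p" "p \<le> 1/2"
    and small: "N * p * (1 - p) + N * q * (1 - q) < 1/16"
  shows "N * p < 1/8"
    and "1/2 + N * (p - q) / 32
           \<le> binomial_pair_expect N p q win_score"
proof -
  define V where "V = N * p * (1 - p) + N * q * (1 - q)"
  define \<mu> where "\<mu> = N * (p - q)"
  define t where "t = (p - q) / p"
  have pq01: "p \<in> {0..1}" "q \<in> {0..1}" and t: "0 \<le> t" "t \<le> 1"
    using pq by (auto simp: t_def)
  have V: "0 \<le> V" "V < 1/16"
    using pq small by (simp_all add: V_def)
  have "N * p * (1/2) \<le> N * p * (1 - p)" and "0 \<le> N * q * (1 - q)"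
    using pq by (intro mult_left_mono mult_nonneg_nonneg; simp)+
  then have Np: "N * p \<le> 2 * V"
    by (simp add: V_def)
  then show "N * p < 1/8"
    using V by simp
  have "\<mu> \<le> N * p" "0 \<le> \<mu>"
    using pq by (simp_all add: \<mu>_def right_diff_distrib mult_left_mono)
  then have \<mu>: "0 \<le> \<mu>" "\<mu> \<le> 1/8"
    using Np V by linarith+
  have t\<mu>: "t * (N * p) = \<mu>"
    using pq by (simp add: t_def \<mu>_def field_simps)
  have "V\<^sup>2 \<le> V / 16" and "6 * \<mu>\<^sup>2 * V \<le> 6 * \<mu>\<^sup>2 / 16" and "\<mu> ^ 4 \<le> \<mu>\<^sup>2"
    using V \<mu> mult_left_mono[of V "1/16" V] mult_left_mono[of V "1/16" "6 * \<mu>\<^sup>2"]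
      mult_left_mono[of "\<mu>\<^sup>2" 1 "\<mu>\<^sup>2"] power_le_one[of \<mu> 2]
    by (simp_all add: power2_eq_square power4_eq_xxxx)
  moreover have "binomial_pair_expect N p q (\<lambda>u v. (real u - real v)\<^sup>2) = V + \<mu>\<^sup>2"
    using binomial_pair_diff_moments(1)[OF pq01, of N] by (simp add: V_def \<mu>_def)
  moreover have "binomial_pair_expect N p q (\<lambda>u v. (real u - real v) ^ 4)
                   \<le> V + 11 * V\<^sup>2 + 6 * \<mu>\<^sup>2 * V + \<mu> ^ 4"
    using binomial_pair_fourth_moment_le[of q p N] pq by (simp add: V_def \<mu>_def)
  ultimately have "V \<le> 3 * binomial_pair_expect N p q (\<lambda>u v. (real u - real v)\<^sup>2)
                   - binomial_pair_expect N p q (\<lambda>u v. (real u - real v) ^ 4)"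
    using V zero_le_power2[of \<mu>] by linarith
  then have "t * V / 2 \<le> binomial_pair_expect N p q (\<lambda>u v. min 1 (t * \<bar>real u - real v\<bar>))"
    using binomial_pair_min_ge_second_fourth_moment[OF pq01 t, of N] t mult_left_mono[of V _ "t / 2"]
    by fastforce
  moreover have "\<mu> / 2 \<le> t * V"
    using Np t t\<mu> mult_left_mono[OF Np t(1)] by simp
  ultimately show "1/2 + N * (p - q) / 32
           \<le> binomial_pair_expect N p q win_score"
    using binomial_pair_win_ge[OF pq, of N, folded t_def] unfolding \<mu>_def[symmetric] by linarith
qed

lemma binomial_pair_win_large_variance:
  fixes N :: nat and p q :: real
  assumes pq: "0 \<le> q" "q < p" "p \<le> 1/2"
    and large: "1/16 \<le> N * p * (1 - p) + N * q * (1 - q)"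
  shows "1/2 + min ((p - q) * sqrt (N / (2 * p))) (1/4) / 64 \<le> binomial_pair_expect N p q win_score"
proof -
  define V where "V = N * p * (1 - p) + N * q * (1 - q)"
  define \<mu> where "\<mu> = N * (p - q)"
  define M2 where "M2 = V + \<mu>\<^sup>2"
  define t where "t = (p - q) / p"
  have pq01: "p \<in> {0..1}" "q \<in> {0..1}" and t: "0 \<le> t"
    using pq by (auto simp: t_def)
  have V: "1/16 \<le> V"
    using large by (simp add: V_def)
  have M2: "binomial_pair_expect N p q (\<lambda>u v. (real u - real v)\<^sup>2) = M2" "M2 > 0"
    using binomial_pair_diff_moments(1)[OF pq01, of N] V
    by (simp_all add: M2_def V_def \<mu>_def add_pos_nonneg)
  have "V \<le> 16 * V\<^sup>2"
    using V mult_left_mono[of "1/16" V V] by (simp add: power2_eq_square)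
  moreover have "binomial_pair_expect N p q (\<lambda>u v. (real u - real v) ^ 4)
                   \<le> V + 11 * V\<^sup>2 + 6 * \<mu>\<^sup>2 * V + \<mu> ^ 4"
    using binomial_pair_fourth_moment_le[of q p N] pq by (simp add: V_def \<mu>_def)
  moreover have "27 * M2\<^sup>2 = 27 * V\<^sup>2 + 54 * (\<mu>\<^sup>2 * V) + 27 * \<mu> ^ 4"
    by (simp add: M2_def power2_eq_square power4_eq_xxxx algebra_simps)
  moreover have "0 \<le> \<mu>\<^sup>2 * V" "0 \<le> \<mu> ^ 4"
    using V by simp_all
  ultimately have M4: "binomial_pair_expect N p q (\<lambda>u v. (real u - real v) ^ 4) \<le> 27 * M2\<^sup>2"
    by linarith
  have "N * p * (1/2) \<le> N * p * (1 - p)" and "0 \<le> N * q * (1 - q)"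
    using pq by (intro mult_left_mono mult_nonneg_nonneg; simp)+
  then have "sqrt (N * p / 2) \<le> sqrt M2"
    unfolding M2_def V_def by (intro real_sqrt_le_mono) (simp add: add_increasing2)
  then have "t * sqrt (N * p / 2) \<le> t * sqrt M2"
    using t by (rule mult_left_mono)
  moreover have "t * sqrt (N * p / 2) = (p - q) * sqrt (N / (2 * p))"
  proof -
    have "N * p / 2 = p\<^sup>2 * (N / (2 * p))"
      using pq by (simp add: field_simps power2_eq_square)
    then have "sqrt (N * p / 2) = p * sqrt (N / (2 * p))"
      using pq by (simp only: real_sqrt_mult real_sqrt_abs abs_of_nonneg)
    then show ?thesis
      using pq by (simp add: t_def)
  qed
  ultimately have "min ((p - q) * sqrt (N / (2 * p))) (1/4) / 8 \<le> min (t * sqrt M2) (1/4) / 8"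
    by (intro divide_right_mono min.mono) auto
  also have "\<dots> \<le> binomial_pair_expect N p q (\<lambda>u v. min 1 (t * \<bar>real u - real v\<bar>))"
    by (rule binomial_pair_min_ge_sqrt_second_moment[OF pq01 t M2 M4])
  finally have "min ((p - q) * sqrt (N / (2 * p))) (1/4) / 8
                  \<le> binomial_pair_expect N p q (\<lambda>u v. min 1 (t * \<bar>real u - real v\<bar>))" .
  then show ?thesis
    using binomial_pair_win_ge[OF pq, of N] unfolding t_def by linarith
qed

section \<open>The Source Filter protocol\<close>

lemma prob_win_tiebreak_binomial:
  assumes p: "p \<in> {0..1}" and q: "q \<in> {0..1}"
  shows "measure_pmf.prob (pair_pmf (binomial_pmf N p) (pair_pmf (binomial_pmf N q) (bernoulli_pmf (1/2))))
           {(u, v, c). if u > v then True else if u < v then False else c}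
         = binomial_pair_expect N p q win_score"
    (is "measure_pmf.prob ?M ?S = _")
proof -
  have "measure_pmf.prob ?M ?S = (\<integral>z. indicator ?S z \<partial>measure_pmf ?M)"
    by simp
  also have "\<dots> = (\<Sum>z\<in>{..N} \<times> {..N} \<times> UNIV. indicator ?S z * pmf ?M z)"
    by (rule integral_measure_pmf_real) (use p q in \<open>auto simp: set_pmf_binomial_eq split: if_splits\<close>)
  also have "\<dots> = (\<Sum>u\<le>N. \<Sum>v\<le>N. \<Sum>c\<in>UNIV. indicator ?S (u, v, c) * pmf ?M (u, v, c))"
    by (simp only: sum.cartesian_product')
  also have "\<dots> = binomial_pair_expect N p q win_score"
    unfolding binomial_pair_expect_def
    by (intro sum.cong refl) (use p q in \<open>auto simp: pmf_pair UNIV_bool binomial_weight_def win_score_def indicator_def\<close>)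
  finally show ?thesis .
qed

lemma noisy_bit_prob_range:
  fixes \<delta> :: real and k n :: nat
  assumes "k \<le> n" "n \<ge> 1" "0 \<le> \<delta>" "\<delta> \<le> 1/2"
  shows "\<delta> + k * (1 - 2 * \<delta>) / n \<in> {0..1}"
proof -
  have "k * (1 - 2 * \<delta>) \<le> n * (1 - 2 * \<delta>)"
    using assms by (intro mult_right_mono) auto
  then have "k * (1 - 2 * \<delta>) / n \<le> 1 - 2 * \<delta>"
    using assms by (simp add: field_simps)
  then show ?thesis
    using assms by simp
qed

lemma observe_noisy_sample:
  fixes \<delta> :: real
  assumes n: "n \<ge> 1" and \<delta>: "0 \<le> \<delta>" "\<delta> \<le> 1/2"
  shows "map_pmf (observe disp) (noisy_sample n \<delta>) =
           bernoulli_pmf (\<delta> + card {j\<in>{1..n}. disp j} * (1 - 2 * \<delta>) / n)"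
proof -
  define k where "k = card {j\<in>{1..n}. disp j}"
  have "k \<le> n"
    unfolding k_def using card_mono[of "{1..n}" "{j\<in>{1..n}. disp j}"] by fastforce
  then have p: "\<delta> + k * (1 - 2 * \<delta>) / n \<in> {0..1}"
    using n \<delta> by (rule noisy_bit_prob_range)
  have "measure_pmf.prob (noisy_sample n \<delta>) {s. observe disp s}
          = (\<integral>s. indicator {s. observe disp s} s \<partial>measure_pmf (noisy_sample n \<delta>))"
    by simp
  also have "\<dots> = (\<Sum>s\<in>{1..n} \<times> UNIV. indicator {s. observe disp s} s * pmf (noisy_sample n \<delta>) s)"
    by (rule integral_measure_pmf_real) (use n in \<open>auto simp: noisy_sample_def\<close>)
  also have "\<dots> = (\<Sum>j\<in>{1..n}. \<Sum>b\<in>UNIV. indicator {s. observe disp s} (j, b) * pmf (noisy_sample n \<delta>) (j, b))"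
    by (simp only: sum.cartesian_product')
  also have "\<dots> = (\<Sum>j\<in>{1..n}. (if disp j then 1 - \<delta> else \<delta>) / n)"
    by (intro sum.cong refl)
       (use \<delta> n in \<open>auto simp: UNIV_bool noisy_sample_def pmf_pair observe_def indicator_def\<close>)
  also have "\<dots> = (\<Sum>j\<in>{1..n}. \<delta> / n + (if disp j then (1 - 2 * \<delta>) / n else 0))"
    by (intro sum.cong refl) (auto simp: diff_divide_distrib)
  also have "\<dots> = \<delta> + k * (1 - 2 * \<delta>) / n"
    using n by (simp add: sum.distrib k_def sum.inter_filter[symmetric])
  finally have "pmf (map_pmf (observe disp) (noisy_sample n \<delta>)) True = \<delta> + k * (1 - 2 * \<delta>) / n"
    by (simp add: pmf_map vimage_def)
  then show ?thesis
    unfolding k_def[symmetric]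
  proof (intro pmf_eqI)
    fix b :: bool
    assume "pmf (map_pmf (observe disp) (noisy_sample n \<delta>)) True = \<delta> + k * (1 - 2 * \<delta>) / n"
    then show "pmf (map_pmf (observe disp) (noisy_sample n \<delta>)) b = pmf (bernoulli_pmf (\<delta> + k * (1 - 2 * \<delta>) / n)) b"
      using p by (cases b) (simp_all add: pmf_False_conv_True[of "map_pmf _ _"])
  qed
qed

lemma count_Pi_pmf_binomial:
  assumes A: "finite A" and F: "map_pmf F q = bernoulli_pmf p" and p: "p \<in> {0..1}"
  shows "map_pmf (\<lambda>f. card {x\<in>A. F (f x)}) (Pi_pmf A d (\<lambda>_. q)) = binomial_pmf (card A) p"
proof -
  have "map_pmf (\<lambda>f. card {x\<in>A. F (f x)}) (Pi_pmf A d (\<lambda>_. q)) =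
        map_pmf (\<lambda>g. card {x\<in>A. g x}) (map_pmf (\<lambda>f. F \<circ> f) (Pi_pmf A d (\<lambda>_. q)))"
    by (simp add: pmf.map_comp o_def)
  also have "map_pmf (\<lambda>f. F \<circ> f) (Pi_pmf A d (\<lambda>_. q)) = Pi_pmf A (F d) (\<lambda>_. map_pmf F q)"
    using A by (rule Pi_pmf_map[symmetric]) simp
  also have "\<dots> = Pi_pmf A (F d) (\<lambda>_. bernoulli_pmf p)"
    unfolding F ..
  also have "map_pmf (\<lambda>g. card {x\<in>A. g x}) \<dots> = binomial_pmf (card A) p"
    by (rule binomial_pmf_altdef'[symmetric]) (use A p in auto)
  finally show ?thesis .
qed

lemma prob_weak_opinion_agent:
  fixes \<delta> :: real
  assumes n: "n \<ge> 1" and \<delta>: "0 \<le> \<delta>" "\<delta> \<le> 1/2"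
    and S: "S0 \<subseteq> {1..n}" "S1 \<subseteq> {1..n}" "S0 \<inter> S1 = {}"
  shows "measure_pmf.prob (agent_pmf n \<delta> h R) {c. weak_opinion S0 S1 h R c} =
           binomial_pair_expect (R * h) (\<delta> + card S1 * (1 - 2 * \<delta>) / n) (\<delta> + card S0 * (1 - 2 * \<delta>) / n)
             win_score"
proof -
  define A where "A = {..<R} \<times> {..<h}"
  define p1 where "p1 = \<delta> + card S1 * (1 - 2 * \<delta>) / n"
  define p0 where "p0 = \<delta> + card S0 * (1 - 2 * \<delta>) / n"
  define P where "P = Pi_pmf A undefined (\<lambda>_. noisy_sample n \<delta>)"
  define count1 where "count1 f = card {x\<in>A. observe (display0 S0 S1) (f x)}" for f
  (* Counter0 counts the samples showing 0, i.e. showing 1 under the complemented display *)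
  define count0 where "count0 f = card {x\<in>A. observe (\<lambda>j. \<not> display1 S0 S1 j) (f x)}" for f
  have A: "finite A" "card A = R * h"
    by (simp_all add: A_def card_cartesian_product)
  have "card S1 \<le> n" "card S0 \<le> n"
    using S card_mono[of "{1..n}"] by fastforce+
  then have p: "p1 \<in> {0..1}" "p0 \<in> {0..1}"
    unfolding p1_def p0_def using noisy_bit_prob_range n \<delta> by blast+
  have "{j\<in>{1..n}. display0 S0 S1 j} = S1" "{j\<in>{1..n}. \<not> display1 S0 S1 j} = S0"
    using S by (auto simp: display0_def display1_def)
  then have obs: "map_pmf (observe (display0 S0 S1)) (noisy_sample n \<delta>) = bernoulli_pmf p1"
    "map_pmf (observe (\<lambda>j. \<not> display1 S0 S1 j)) (noisy_sample n \<delta>) = bernoulli_pmf p0"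
    using observe_noisy_sample[OF n \<delta>] by (simp_all add: p1_def p0_def)
  have B1: "map_pmf count1 P = binomial_pmf (R * h) p1"
    unfolding count1_def P_def A(2)[symmetric] by (rule count_Pi_pmf_binomial[OF A(1) obs(1) p(1)])
  have B0: "map_pmf count0 P = binomial_pmf (R * h) p0"
    unfolding count0_def P_def A(2)[symmetric] by (rule count_Pi_pmf_binomial[OF A(1) obs(2) p(2)])
  define \<Phi> :: "agent_coins \<Rightarrow> nat \<times> nat \<times> bool" where "\<Phi> = map_prod count1 (map_prod count0 id)"
  define S :: "(nat \<times> nat \<times> bool) set"
    where "S = {(u, v, c). if u > v then True else if u < v then False else c}"
  have "{c. weak_opinion S0 S1 h R c} = \<Phi> -` S"
    unfolding weak_opinion_def counter1_def counter0_def count1_def count0_def A_def \<Phi>_def S_def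
    by (auto simp: observe_def)
  then have "measure_pmf.prob (agent_pmf n \<delta> h R) {c. weak_opinion S0 S1 h R c} =
               measure_pmf.prob (map_pmf \<Phi> (agent_pmf n \<delta> h R)) S"
    by simp
  also have "map_pmf \<Phi> (agent_pmf n \<delta> h R) =
      pair_pmf (binomial_pmf (R * h) p1) (pair_pmf (binomial_pmf (R * h) p0) (bernoulli_pmf (1/2)))"
    unfolding agent_pmf_def P_def[unfolded A_def, symmetric] \<Phi>_def
    by (simp add: map_prod_def map_pair B1 B0)
  also have "measure_pmf.prob \<dots> S = binomial_pair_expect (R * h) p1 p0 win_score"
    unfolding S_def by (rule prob_win_tiebreak_binomial[OF p])
  finally show ?thesis
    unfolding p1_def p0_def .
qed

lemma prob_weak_opinion:
  fixes \<delta> :: real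
  assumes "n \<ge> 1" "0 \<le> \<delta>" "\<delta> \<le> 1/2" "S0 \<subseteq> {1..n}" "S1 \<subseteq> {1..n}" "S0 \<inter> S1 = {}"
    and i: "i \<in> {1..n}"
  shows "measure_pmf.prob (source_filter_pmf n \<delta> h R) {\<omega>. weak_opinion S0 S1 h R (\<omega> i)} =
           binomial_pair_expect (R * h) (\<delta> + card S1 * (1 - 2 * \<delta>) / n) (\<delta> + card S0 * (1 - 2 * \<delta>) / n)
             win_score"
proof -
  have "map_pmf (\<lambda>\<omega>. \<omega> i) (source_filter_pmf n \<delta> h R) = agent_pmf n \<delta> h R"
    unfolding source_filter_pmf_def using i by (subst Pi_pmf_component) auto
  then have "measure_pmf.prob (source_filter_pmf n \<delta> h R) {\<omega>. weak_opinion S0 S1 h R (\<omega> i)} =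
               measure_pmf.prob (agent_pmf n \<delta> h R) {c. weak_opinion S0 S1 h R c}"
    by (metis (no_types) measure_map_pmf vimage_Collect_eq)
  then show ?thesis
    using prob_weak_opinion_agent[OF assms(1-6)] by simp
qed

lemma indep_weak_opinions:
  "prob_space.indep_vars (measure_pmf (source_filter_pmf n \<delta> h R))
     (\<lambda>_. count_space UNIV) (\<lambda>i \<omega>. weak_opinion S0 S1 h R (\<omega> i)) {1..n}"
proof -
  have "prob_space.indep_vars (measure_pmf (source_filter_pmf n \<delta> h R))
          (\<lambda>_. count_space UNIV) (\<lambda>i \<omega>. \<omega> i) {1..n}"
    unfolding source_filter_pmf_def by (rule indep_vars_Pi_pmf) simp
  then show ?thesis
    by (rule prob_space.indep_vars_compose2[OF measure_pmf.prob_space_axioms]) simp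
qed

lemma ln_bounds:
  assumes "n \<ge> 3"
  shows "1 \<le> ln (real n)" "ln (real n) \<le> 2 * sqrt (real n)"
proof -
  have "ln 3 \<le> ln (real n)"
    using assms by simp
  then show "1 \<le> ln (real n)"
    using ln3_gt_1 by linarith
  have "ln (sqrt (real n)) \<le> sqrt (real n) - 1"
    using assms by (intro ln_le_minus_one) simp
  then show "ln (real n) \<le> 2 * sqrt (real n)"
    using assms by (simp add: ln_sqrt)
qed

lemma phase_len_mult_ge:
  assumes "h \<ge> 1"
  shows "real m \<le> real (phase_len m h * h)"
proof -
  have "real m / real h \<le> real (phase_len m h)"
    unfolding phase_len_def by (simp add: ceiling_le_iff)
  then show ?thesis
    using assms by (simp add: field_simps)
qed

lemma noisy_bit_probs_ordered:
  fixes n \<delta> s0 s1 :: real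
  assumes n: "n > 0" and s: "0 \<le> s0" "s0 < s1" "4 * s1 \<le> n" and \<delta>: "0 \<le> \<delta>" "\<delta> < 1/2"
  shows "0 \<le> \<delta> + s0 * (1 - 2 * \<delta>) / n" "\<delta> + s0 * (1 - 2 * \<delta>) / n < \<delta> + s1 * (1 - 2 * \<delta>) / n"
    "\<delta> + s1 * (1 - 2 * \<delta>) / n \<le> 1/2"
proof -
  show "0 \<le> \<delta> + s0 * (1 - 2 * \<delta>) / n"
    using n s \<delta> by simp
  show "\<delta> + s0 * (1 - 2 * \<delta>) / n < \<delta> + s1 * (1 - 2 * \<delta>) / n"
    using n s \<delta> by (simp add: divide_strict_right_mono)
  define x where "x = s1 * (1 - 2 * \<delta>) / n"
  have "s1 * (1 - 2 * \<delta>) \<le> (n / 4) * (1 - 2 * \<delta>)"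
    using s \<delta> by (intro mult_right_mono) auto
  then have "x \<le> (1 - 2 * \<delta>) / 4"
    using n by (simp add: x_def field_simps)
  then show "\<delta> + s1 * (1 - 2 * \<delta>) / n \<le> 1/2"
    using \<delta> unfolding x_def[symmetric] by (simp add: field_simps)
qed

lemma bias_ge_small_variance:
  fixes n N \<delta> s L :: real
  assumes n: "n > 0" and L: "1 \<le> L" and s: "s > 0" and \<delta>: "0 \<le> \<delta>" "\<delta> < 1/8"
    and N: "10^6 * (sqrt n * L / s) \<le> N"
  shows "4 * sqrt (L / n) \<le> N * (s * (1 - 2 * \<delta>) / n) / 32"
proof -
  define r where "r = sqrt n"
  have r: "r > 0" "r\<^sup>2 = n"
    using n by (simp_all add: r_def)
  have Ns: "10^6 * (r * L) \<le> N * s"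
    using N s by (simp add: r_def field_simps)
  moreover have "0 \<le> 10^6 * (r * L)"
    using r L by simp
  ultimately have "0 \<le> N * s"
    by linarith
  have "10^6 * (r * L) * (3/4) \<le> N * s * (1 - 2 * \<delta>)"
    by (rule mult_mono[OF Ns]) (use \<delta> \<open>0 \<le> N * s\<close> in auto)
  then have "750000 * L / r \<le> N * (s * (1 - 2 * \<delta>) / n)"
    using r by (simp add: field_simps power2_eq_square flip: r(2))
  moreover have "sqrt L \<le> sqrt (L * L)"
    using L by (intro real_sqrt_le_mono) simp
  then have "sqrt L \<le> L"
    using L by simp
  then have "4 * sqrt L / r \<le> 750000 * L / 32 / r"
    using r L by (intro divide_right_mono) auto
  then have "4 * sqrt (L / n) \<le> 750000 * L / r / 32"
    by (simp add: r_def real_sqrt_divide)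
  ultimately show ?thesis
    by (smt (verit) divide_right_mono)
qed

lemma bias_ge_large_variance:
  fixes n X L :: real
  assumes n: "2^44 \<le> n" and L: "1 \<le> L" "L \<le> 2 * sqrt n" and X: "0 \<le> X" "10^6 * L / (8 * n) \<le> X\<^sup>2"
  shows "4 * sqrt (L / n) \<le> min X (1/4) / 64"
proof -
  have "(2^22)\<^sup>2 \<le> n"
    using n by simp
  then have r: "2^22 \<le> sqrt n"
    by (simp add: real_le_rsqrt)
  have n0: "n > 0"
    using n by (smt (verit) zero_less_power)
  have "L / n \<le> 2 * sqrt n / n"
    using L n0 by (simp add: divide_right_mono)
  also have "\<dots> = 2 / sqrt n"
    using n0 real_sqrt_mult_self[of n] by (simp add: field_simps)
  also have "\<dots> \<le> 2 / 2^22"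
    using r n0 by (intro divide_left_mono) auto
  also have "\<dots> \<le> (1/1024)\<^sup>2"
    by (simp add: power2_eq_square)
  finally have "L / n \<le> (1/1024)\<^sup>2" .
  then have "256 * sqrt (L / n) \<le> 1/4"
    using real_sqrt_le_mono[of "L / n" "(1/1024)\<^sup>2"] by simp
  moreover have "(256 * sqrt (L / n))\<^sup>2 \<le> X\<^sup>2"
    using X L n0 by (simp add: power_mult_distrib field_simps)
  then have "256 * sqrt (L / n) \<le> X"
    using X(1) by (rule power2_le_imp_le)
  ultimately show ?thesis
    by (simp add: min_def)
qed

lemma drift_sq_over_p1_ge:
  fixes n N \<delta> s0 s1 L c :: real
  defines "s \<equiv> s1 - s0"
    and "p1 \<equiv> \<delta> + s1 * (1 - 2 * \<delta>) / n" and "p0 \<equiv> \<delta> + s0 * (1 - 2 * \<delta>) / n"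
  assumes n: "0 < n" and s: "0 \<le> s0" "1 \<le> s" "4 * s1 \<le> n" and \<delta>: "0 \<le> \<delta>" "\<delta> < 1/2"
    and N: "0 \<le> N" and c: "0 \<le> c" and L: "0 \<le> L"
    and noise: "c * (n * \<delta> * L / (min (s\<^sup>2) n * (1 - 2 * \<delta>)\<^sup>2)) \<le> N"
    and sources: "c * ((s0 + s1) * L / s\<^sup>2) \<le> N"
  shows "c * L / (4 * n) \<le> (p1 - p0)\<^sup>2 * N / p1"
proof -
  define e where "e = 1 - 2 * \<delta>"
  have e: "0 < e" "e \<le> 1"
    using \<delta> by (auto simp: e_def)
  have s1: "1 \<le> s1"
    using s by (simp add: s_def)
  have "p1 - p0 = s * e / n"
    unfolding p1_def p0_def s_def e_def using n by (simp add: field_simps)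
  then have drift: "(p1 - p0)\<^sup>2 = s\<^sup>2 * e\<^sup>2 / n\<^sup>2"
    by (simp add: power_divide power_mult_distrib)
  have p1: "p1 = \<delta> + s1 * e / n" "0 < p1"
    unfolding p1_def e_def[symmetric] using \<delta> n s1 e by (simp_all add: add_nonneg_pos)
  (* either the noise dominates p1 and the first bound on N applies, or the sources do and the
     second one applies *)
  show ?thesis
  proof (cases "s1 * e / n \<le> \<delta>")
    case True
    then have "0 < \<delta>" "p1 \<le> 2 * \<delta>"
      using n s1 e p1 by (auto intro: less_le_trans[OF divide_pos_pos])
    have "n * \<delta> * L / (s\<^sup>2 * e\<^sup>2) \<le> n * \<delta> * L / (min (s\<^sup>2) n * e\<^sup>2)"
      using n s e \<delta> L by (intro divide_left_mono mult_right_mono mult_nonneg_nonneg) auto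
    then have "c * (n * \<delta> * L / (s\<^sup>2 * e\<^sup>2)) \<le> N"
      using noise c unfolding e_def by (meson mult_left_mono order_trans)
    then have "(s\<^sup>2 * e\<^sup>2 / n\<^sup>2) * (c * (n * \<delta> * L / (s\<^sup>2 * e\<^sup>2))) \<le> (p1 - p0)\<^sup>2 * N"
      unfolding drift by (intro mult_left_mono) auto
    moreover have "(s\<^sup>2 * e\<^sup>2 / n\<^sup>2) * (c * (n * \<delta> * L / (s\<^sup>2 * e\<^sup>2))) = c * L / (2 * n) * (2 * \<delta>)"
      using n e s by (simp add: field_simps power2_eq_square)
    ultimately have bound: "c * L / (2 * n) * (2 * \<delta>) \<le> (p1 - p0)\<^sup>2 * N"
      by simp
    have "c * L / (4 * n) \<le> c * L / (2 * n)"
      using c L n by (intro divide_left_mono) auto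
    also have "\<dots> \<le> (p1 - p0)\<^sup>2 * N / (2 * \<delta>)"
      using bound \<open>0 < \<delta>\<close> by (simp add: pos_le_divide_eq)
    also have "\<dots> \<le> (p1 - p0)\<^sup>2 * N / p1"
      using \<open>p1 \<le> 2 * \<delta>\<close> p1 N by (intro divide_left_mono) auto
    finally show ?thesis .
  next
    case False
    then have "p1 \<le> 2 * (s1 * e / n)"
      using p1 by linarith
    have "s1 / n \<le> 1/4"
      using s n by (simp add: field_simps)
    moreover have "s1 * e / n \<le> s1 / n"
      using e s1 n by (simp add: divide_right_mono mult_left_le)
    ultimately have "1/2 \<le> e"
      using False unfolding e_def by linarith
    have "s1 * L / s\<^sup>2 \<le> (s0 + s1) * L / s\<^sup>2"
      using s L by (intro divide_right_mono mult_right_mono) auto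
    then have "c * (s1 * L / s\<^sup>2) \<le> N"
      using sources c by (meson mult_left_mono order_trans)
    then have "(s\<^sup>2 * e\<^sup>2 / n\<^sup>2) * (c * (s1 * L / s\<^sup>2)) \<le> (p1 - p0)\<^sup>2 * N"
      unfolding drift by (intro mult_left_mono) auto
    moreover have "(s\<^sup>2 * e\<^sup>2 / n\<^sup>2) * (c * (s1 * L / s\<^sup>2)) = c * L * e / (2 * n) * (2 * (s1 * e / n))"
      using n s by (simp add: field_simps power2_eq_square)
    ultimately have bound: "c * L * e / (2 * n) * (2 * (s1 * e / n)) \<le> (p1 - p0)\<^sup>2 * N"
      by simp
    have "c * L / (4 * n) = c * L * (1/2) / (2 * n)"
      by simp
    also have "\<dots> \<le> c * L * e / (2 * n)"
      using \<open>1/2 \<le> e\<close> c L n by (intro divide_right_mono mult_left_mono) auto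
    also have "\<dots> \<le> (p1 - p0)\<^sup>2 * N / (2 * (s1 * e / n))"
      using bound n e s1 by (subst pos_le_divide_eq) auto
    also have "\<dots> \<le> (p1 - p0)\<^sup>2 * N / p1"
      using \<open>p1 \<le> 2 * (s1 * e / n)\<close> p1 N n e s1 by (intro divide_left_mono) auto
    finally show ?thesis .
  qed
qed

lemma binomial_pair_win_ge_bias:
  fixes N :: nat and n \<delta> L s0 s1 :: real
  assumes n: "2^44 \<le> n" and L: "1 \<le> L" "L \<le> 2 * sqrt n"
    and s: "0 \<le> s0" "s0 + 1 \<le> s1" "4 * s1 \<le> n" and \<delta>: "0 \<le> \<delta>" "\<delta> < 1/2" and N: "1 \<le> N"
    and noise: "10^6 * (n * \<delta> * L / (min ((s1 - s0)\<^sup>2) n * (1 - 2 * \<delta>)\<^sup>2)) \<le> N"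
    and spread: "10^6 * (sqrt n * L / (s1 - s0)) \<le> N"
    and sources: "10^6 * ((s0 + s1) * L / (s1 - s0)\<^sup>2) \<le> N"
  defines "p1 \<equiv> \<delta> + s1 * (1 - 2 * \<delta>) / n" and "p0 \<equiv> \<delta> + s0 * (1 - 2 * \<delta>) / n"
  shows "1/2 + 4 * sqrt (L / n) \<le> binomial_pair_expect N p1 p0 win_score"
proof -
  have n0: "n > 0"
    using n by (smt (verit) zero_less_power)
  have p: "0 \<le> p0" "p0 < p1" "p1 \<le> 1/2"
    unfolding p1_def p0_def using noisy_bit_probs_ordered[OF n0 _ _ s(3) \<delta>] s by simp_all
  have drift: "p1 - p0 = (s1 - s0) * (1 - 2 * \<delta>) / n"
    unfolding p1_def p0_def using n0 by (simp add: field_simps)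
  show ?thesis
  proof (cases "N * p1 * (1 - p1) + N * p0 * (1 - p0) < 1/16")
    case True
    note small = binomial_pair_win_small_variance[OF p True]
    have "\<delta> \<le> p1"
      unfolding p1_def using n0 s \<delta> by simp
    also have "p1 \<le> N * p1"
      using N p by (simp add: mult_le_cancel_right1)
    finally have "\<delta> \<le> N * p1" .
    then have "4 * sqrt (L / n) \<le> N * ((s1 - s0) * (1 - 2 * \<delta>) / n) / 32"
      using small(1) n0 L s \<delta> spread by (intro bias_ge_small_variance) auto
    then show ?thesis
      using small(2) drift by simp
  next
    case False
    have "10^6 * L / (8 * n) = 10^6 * L / (4 * n) / 2"
      by simp
    also have "\<dots> \<le> (p1 - p0)\<^sup>2 * N / p1 / 2"
      unfolding p1_def p0_def
      by (intro divide_right_mono drift_sq_over_p1_ge[OF n0 s(1) _ s(3) \<delta> _ _ _ noise sources])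
         (use L s N in auto)
    also have "\<dots> = ((p1 - p0) * sqrt (N / (2 * p1)))\<^sup>2"
      using p by (simp add: power_mult_distrib)
    finally have "10^6 * L / (8 * n) \<le> ((p1 - p0) * sqrt (N / (2 * p1)))\<^sup>2" .
    then have "4 * sqrt (L / n) \<le> min ((p1 - p0) * sqrt (N / (2 * p1))) (1/4) / 64"
      using p n L by (intro bias_ge_large_variance) auto
    moreover have "1/16 \<le> N * p1 * (1 - p1) + N * p0 * (1 - p0)"
      using False by simp
    ultimately show ?thesis
      using binomial_pair_win_large_variance[OF p] by fastforce
  qed
qed

lemma prob_weak_opinion_ge:
  fixes n h m :: nat and S0 S1 :: "nat set" and \<delta> :: real
  defines "s \<equiv> real (card S1) - real (card S0)" and "L \<equiv> ln (real n)"
  assumes n: "2^44 \<le> n" and S: "S0 \<subseteq> {1..n}" "S1 \<subseteq> {1..n}" "S0 \<inter> S1 = {}"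
    and card: "4 * card S1 \<le> n" "card S0 < card S1"
    and \<delta>: "0 \<le> \<delta>" "\<delta> < 1/2" and h: "1 \<le> h"
    and m: "10^6 * (real n * \<delta> * L / (min (s\<^sup>2) (real n) * (1 - 2 * \<delta>)\<^sup>2) + sqrt (real n) * L / s
                     + real (card S0 + card S1) * L / s\<^sup>2 + real h * L) \<le> real m"
    and i: "i \<in> {1..n}"
  shows "1/2 + 4 * sqrt (L / real n) \<le>
           measure_pmf.prob (source_filter_pmf n \<delta> h (phase_len m h)) {\<omega>. weak_opinion S0 S1 h (phase_len m h) (\<omega> i)}"
proof -
  define N where "N = phase_len m h * h"
  define T1 where "T1 = real n * \<delta> * L / (min (s\<^sup>2) (real n) * (1 - 2 * \<delta>)\<^sup>2)"
  define T2 where "T2 = sqrt (real n) * L / s"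
  define T3 where "T3 = real (card S0 + card S1) * L / s\<^sup>2"
  have "(3::nat) \<le> 2^44" by simp
  then have n3: "3 \<le> n" using n by linarith
  have L: "1 \<le> L" "L \<le> 2 * sqrt (real n)"
    unfolding L_def using ln_bounds[OF n3] by auto
  have s: "1 \<le> s"
    unfolding s_def using card by simp
  have "1 * 1 \<le> real h * L"
    using h L by (intro mult_mono) auto
  moreover have "0 \<le> T1" "0 \<le> T2" "0 \<le> T3"
    unfolding T1_def T2_def T3_def using \<delta> L s by auto
  moreover have "real m \<le> N"
    unfolding N_def using phase_len_mult_ge[OF h] by simp
  ultimately have "10^6 * T1 \<le> N" "10^6 * T2 \<le> N" "10^6 * T3 \<le> N" "1 \<le> N"
    using m unfolding T1_def[symmetric] T2_def[symmetric] T3_def[symmetric] by (simp_all add: algebra_simps)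
  then have "1/2 + 4 * sqrt (L / real n) \<le> binomial_pair_expect N
               (\<delta> + card S1 * (1 - 2 * \<delta>) / n) (\<delta> + card S0 * (1 - 2 * \<delta>) / n) win_score"
    using n L card \<delta> unfolding T1_def T2_def T3_def s_def
    by (intro binomial_pair_win_ge_bias) auto
  also have "\<dots> = measure_pmf.prob (source_filter_pmf n \<delta> h (phase_len m h))
                    {\<omega>. weak_opinion S0 S1 h (phase_len m h) (\<omega> i)}"
    unfolding N_def using n3 \<delta> S i by (intro prob_weak_opinion[symmetric]) auto
  finally show ?thesis .
qed

theorem lemma28:
  shows "\<exists>c1::real > 0. \<exists>n0::nat. \<forall>n S0 S1 (\<delta>::real) h m.
    let s0 = card S0; s1 = card S1; s = real s1 - real s0; R = phase_len m h;
        Y = (\<lambda>i \<omega>. weak_opinion S0 S1 h R (\<omega> i))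
    in (n \<ge> n0 \<and> S0 \<subseteq> {1..n} \<and> S1 \<subseteq> {1..n} \<and> S0 \<inter> S1 = {} \<and>
        4 * s0 \<le> n \<and> 4 * s1 \<le> n \<and> s1 > s0 \<and>
        0 \<le> \<delta> \<and> \<delta> < 1/2 \<and> h \<ge> 1 \<and>
        real m \<ge> c1 * (real n * \<delta> * ln (real n) / (min (s^2) (real n) * (1 - 2*\<delta>)^2)
                        + sqrt (real n) * ln (real n) / s
                        + real (s0 + s1) * ln (real n) / s^2
                        + real h * ln (real n)))
       \<longrightarrow> (\<forall>i\<in>{1..n}. measure_pmf.prob (source_filter_pmf n \<delta> h R) {\<omega>. Y i \<omega>}
                           \<ge> 1/2 + 4 * sqrt (ln (real n) / real n))
         \<and> prob_space.indep_vars (measure_pmf (source_filter_pmf n \<delta> h R))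
              (\<lambda>_. count_space UNIV) Y {1..n}"
  unfolding Let_def
  by (intro exI[of _ "10^6"] conjI exI[of _ "2^44"] allI impI ballI; (elim conjE)?)
     (simp, (rule prob_weak_opinion_ge; assumption), rule indep_weak_opinions)

end
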